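(* Let $(J,S)$ be a homogeneous $d$-dimensional multi-time Markov renewal chain with semi-Markov kernel $q$, let $u=\sum_{n\ge0}q^{(n)}=(\mathbbm{I}_s-q)^{(-1)}$, and let $Z$ be the associated multi-time semi-Markov chain with transition function $P$. Then $P=u*\widetilde{H}$.
   Context: $E=\{1,\dots,s\}$; $\mathcal{M}_s(\mathbb{N}^d)$ is the set of functions $\mathbb{N}^d\to\mathbb{R}^{s\times s}$, with convolution $[A*B](k)=\sum_{l+l'=k}A(l)B(l')$, identity $\mathbbm{I}_s$, powers $A^{(n)}$ and convolutional inverse $A^{(-1)}$. $\mathbb{N}^d$ carries the partial order $k\le l$ iff $k_u\le l_u$ for all $u$ ($k<l$: $k\le l$, $k\neq l$). A homogeneous $d$-dimensional multi-time Markov renewal chain is a process $(J_n,S_n)_{n\in\mathbb{N}}$, $J_n\in E$, $S_n\in\mathbb{N}^d$, $S_0=0_d$, $S_n<S_{n+1}$, with a.s. $\mathbb{P}(J_{n+1}=j,S_{n+1}-S_n=k\mid J_{0:n},S_{0:n})=q_{J_nj}(k)$, $q_{ij}(k)=\mathbb{P}(J_{n+1}=j,S_{n+1}-S_n=k\mid J_n=i)$ independent of $n$. $X_{n+1}=S_{n+1}-S_n$. $N(k)=\sup\{n\in\mathbb{N}:S_n\le k\}$; the associated multi-time semi-Markov chain is $Z_k=J_{N(k)}$, $k\in\mathbb{N}^d$, and its transition function is $P_{ij}(k)=\mathbb{P}(Z_k=j\mid Z_{0_d}=i)$. With $H_i(k)=\mathbb{P}(X_{n+1}\le k\mid J_n=i)$,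 $\widetilde{H}\in\mathcal{M}_s(\mathbb{N}^d)$ is the diagonal matrix sequence $\widetilde{H}(k)=\mathrm{diag}(1-H_1(k),\dots,1-H_s(k))$. *)

theory Defs
  imports "HOL-Probability.Probability"
begin

(* N^d is represented as 'd \<Rightarrow> nat with 'd a finite index type (d = CARD('d));
   the order is the pointwise order of functions (k \<le> l iff k u \<le> l u for all u),
   subtraction is pointwise.
   A matrix sequence in M_s(N^d) is a function ('d \<Rightarrow> nat) \<Rightarrow> nat \<Rightarrow> nat \<Rightarrow> real,
   A k i j being the (i,j) entry of A(k), i,j \<in> {1..s}. *)

type_synonym 'd mseq = "('d \<Rightarrow> nat) \<Rightarrow> nat \<Rightarrow> nat \<Rightarrow> real"

definition conv :: "nat \<Rightarrow> ('d::finite) mseq \<Rightarrow> 'd mseq \<Rightarrow> 'd mseq" where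
  "conv s A B k i j = (\<Sum>l\<in>{l. l \<le> k}. \<Sum>r\<in>{1..s}. A l i r * B (k - l) r j)"

definition idseq :: "('d::finite) mseq" where
  "idseq k i j = (if k = (\<lambda>_. 0) \<and> i = j then 1 else 0)"

primrec convpow :: "nat \<Rightarrow> ('d::finite) mseq \<Rightarrow> nat \<Rightarrow> 'd mseq" where
  "convpow s A 0 = idseq"
| "convpow s A (Suc n) = conv s (convpow s A n) A"

definition useq :: "nat \<Rightarrow> ('d::finite) mseq \<Rightarrow> 'd mseq" where
  "useq s q k i j = (\<Sum>n. convpow s q n k i j)"

(* H_i(k) = P(X_{n+1} \<le> k | J_n = i) = \<Sum>_j \<Sum>_{l \<le> k} q_ij(l) *)
definition Hdist :: "nat \<Rightarrow> ('d::finite) mseq \<Rightarrow> nat \<Rightarrow> ('d \<Rightarrow> nat) \<Rightarrow> real" where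
  "Hdist s q i k = (\<Sum>j\<in>{1..s}. \<Sum>l\<in>{l. l \<le> k}. q l i j)"

definition Htilde :: "nat \<Rightarrow> ('d::finite) mseq \<Rightarrow> 'd mseq" where
  "Htilde s q k i j = (if i = j then 1 - Hdist s q i k else 0)"

(* The a.s. conditional-probability
   condition is stated in its elementary (discrete) form: for every history. *)
definition multi_time_MRC ::
  "'w measure \<Rightarrow> nat \<Rightarrow> ('d::finite) mseq \<Rightarrow> (nat \<Rightarrow> 'w \<Rightarrow> nat) \<Rightarrow> (nat \<Rightarrow> 'w \<Rightarrow> ('d \<Rightarrow> nat)) \<Rightarrow> bool"
where
  "multi_time_MRC M s q J S \<longleftrightarrow>
     prob_space M \<and> 1 \<le> s \<and>
     (\<forall>n. J n \<in> measurable M (count_space UNIV)) \<and>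
     (\<forall>n. S n \<in> measurable M (count_space UNIV)) \<and>
     (\<forall>n. \<forall>\<omega>\<in>space M. J n \<omega> \<in> {1..s}) \<and>
     (\<forall>\<omega>\<in>space M. S 0 \<omega> = (\<lambda>_. 0)) \<and>
     (\<forall>n. \<forall>\<omega>\<in>space M. S n \<omega> < S (Suc n) \<omega>) \<and>
     (\<forall>n (js :: nat \<Rightarrow> nat) (ss :: nat \<Rightarrow> ('d \<Rightarrow> nat)) j k.
        measure M {\<omega>\<in>space M. J (Suc n) \<omega> = j \<and> S (Suc n) \<omega> - S n \<omega> = k \<and>
                         (\<forall>m\<le>n. J m \<omega> = js m \<and> S m \<omega> = ss m)}
        = q k (js n) j * measure M {\<omega>\<in>space M. \<forall>m\<le>n. J m \<omega> = js m \<and> S m \<omega> = ss m})"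

definition Ncount :: "(nat \<Rightarrow> 'w \<Rightarrow> ('d::finite \<Rightarrow> nat)) \<Rightarrow> ('d \<Rightarrow> nat) \<Rightarrow> 'w \<Rightarrow> nat" where
  "Ncount S k \<omega> = Sup {n. S n \<omega> \<le> k}"

definition Zsm :: "(nat \<Rightarrow> 'w \<Rightarrow> nat) \<Rightarrow> (nat \<Rightarrow> 'w \<Rightarrow> ('d::finite \<Rightarrow> nat)) \<Rightarrow> ('d \<Rightarrow> nat) \<Rightarrow> 'w \<Rightarrow> nat" where
  "Zsm J S k \<omega> = J (Ncount S k \<omega>) \<omega>"

definition smc_transition ::
  "'w measure \<Rightarrow> (nat \<Rightarrow> 'w \<Rightarrow> nat) \<Rightarrow> (nat \<Rightarrow> 'w \<Rightarrow> ('d::finite \<Rightarrow> nat)) \<Rightarrow> 'd mseq" where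
  "smc_transition M J S k i j =
     measure M {\<omega>\<in>space M. Zsm J S k \<omega> = j \<and> Zsm J S (\<lambda>_. 0) \<omega> = i}
     / measure M {\<omega>\<in>space M. Zsm J S (\<lambda>_. 0) \<omega> = i}"

end

theory Submission
  imports Defs
begin

(* Summing the Markov property over all histories (J_0..J_n, S_0..S_n) shows that the pair
   (J_n, S_n) evolves by convolution with q, so P(J_n = j, S_n = l, J_0 = i) = q^(n)(l)_ij P(J_0 = i).
   The event Z_k = j splits according to the index n = N(k) <= |k| and the time l = S_n <= k of
   the last renewal up to k; given the past, no further renewal happens up to k with probability
   1 - H_j(k - l).  Summing over n produces u, summing over l the convolution with H~. *)

lemma diff_fun_cancel_iff:
  fixes a b c :: "'d \<Rightarrow> nat"
  assumes "b \<le> a" "b \<le> c"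
  shows "a - b = c - b \<longleftrightarrow> a = c"
proof
  assume "a - b = c - b"
  show "a = c"
  proof
    fix u
    have "a u - b u = c u - b u"
      using \<open>a - b = c - b\<close> by (simp add: fun_diff_def fun_eq_iff)
    with le_funD[OF assms(1), of u] le_funD[OF assms(2), of u] show "a u = c u"
      by arith
  qed
qed simp

lemma diff_fun_le_diff_iff:
  fixes a b c :: "'d \<Rightarrow> nat"
  assumes "b \<le> c"
  shows "a - b \<le> c - b \<longleftrightarrow> a \<le> c"
proof -
  have "a u - b u \<le> c u - b u \<longleftrightarrow> a u \<le> c u" for u
    using le_funD[OF assms, of u] by arith
  then show ?thesis
    by (simp add: le_fun_def fun_diff_def)
qed

lemma finite_le_fun: "finite {l :: 'd::finite \<Rightarrow> nat. l \<le> k}"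
proof (rule finite_subset)
  show "{l. l \<le> k} \<subseteq> Pi\<^sub>E UNIV (\<lambda>u. {..k u})"
    by (auto simp: le_fun_def PiE_def)
  show "finite (Pi\<^sub>E UNIV (\<lambda>u. {..k u}))"
    by (rule finite_PiE) auto
qed

lemma sum_UNIV_strict_mono_fun:
  fixes a b :: "'d::finite \<Rightarrow> nat"
  assumes "a < b"
  shows "sum a UNIV < sum b UNIV"
proof (rule sum_strict_mono_ex1)
  show "\<forall>u\<in>UNIV. a u \<le> b u"
    using assms by (simp add: less_fun_def le_fun_def)
  show "\<exists>u\<in>UNIV. a u < b u"
    using assms by (auto simp: less_fun_def le_fun_def not_le)
qed simp

lemma (in finite_measure) measure_eq_sum_over_values:
  assumes "finite X" and "\<And>\<omega>. \<omega> \<in> space M \<Longrightarrow> P \<omega> \<Longrightarrow> f \<omega> \<in> X"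
    and "\<And>x. x \<in> X \<Longrightarrow> {\<omega>\<in>space M. P \<omega> \<and> f \<omega> = x} \<in> sets M"
  shows "measure M {\<omega>\<in>space M. P \<omega>} = (\<Sum>x\<in>X. measure M {\<omega>\<in>space M. P \<omega> \<and> f \<omega> = x})"
proof -
  have "{\<omega>\<in>space M. P \<omega>} = (\<Union>x\<in>X. {\<omega>\<in>space M. P \<omega> \<and> f \<omega> = x})"
    using assms(2) by auto
  also have "measure M \<dots> = (\<Sum>x\<in>X. measure M {\<omega>\<in>space M. P \<omega> \<and> f \<omega> = x})"
    using assms(1,3)
    by (intro finite_measure_finite_Union) (auto simp: disjoint_family_on_def)
  finally show ?thesis .
qed

locale markov_renewal_chain =
  fixes M :: "'w measure" and s :: nat and q :: "('d::finite) mseq"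
    and J :: "nat \<Rightarrow> 'w \<Rightarrow> nat" and S :: "nat \<Rightarrow> 'w \<Rightarrow> ('d \<Rightarrow> nat)"
  assumes MRC: "multi_time_MRC M s q J S"
begin

sublocale prob_space M
  using MRC by (simp add: multi_time_MRC_def)

lemma J_measurable [measurable]: "J n \<in> measurable M (count_space UNIV)"
  and S_measurable [measurable]: "S n \<in> measurable M (count_space UNIV)"
  and J_range: "\<omega> \<in> space M \<Longrightarrow> J n \<omega> \<in> {1..s}"
  and S_0: "\<omega> \<in> space M \<Longrightarrow> S 0 \<omega> = (\<lambda>_. 0)"
  and S_less_Suc: "\<omega> \<in> space M \<Longrightarrow> S n \<omega> < S (Suc n) \<omega>"
  and markov_property:
    "measure M {\<omega>\<in>space M. J (Suc n) \<omega> = j \<and> S (Suc n) \<omega> - S n \<omega> = d \<and>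
                              (\<forall>m\<le>n. J m \<omega> = js m \<and> S m \<omega> = ss m)}
     = q d (js n) j * measure M {\<omega>\<in>space M. \<forall>m\<le>n. J m \<omega> = js m \<and> S m \<omega> = ss m}"
  using MRC by (simp_all add: multi_time_MRC_def)

lemma S_mono: "\<omega> \<in> space M \<Longrightarrow> m \<le> n \<Longrightarrow> S m \<omega> \<le> S n \<omega>"
  by (rule lift_Suc_mono_le[of "\<lambda>n. S n \<omega>"]) (auto intro: less_imp_le S_less_Suc)

lemma index_le_sum_S: "\<omega> \<in> space M \<Longrightarrow> n \<le> sum (S n \<omega>) UNIV"
proof (induction n)
  case (Suc n)
  then show ?case
    using sum_UNIV_strict_mono_fun[OF S_less_Suc[of \<omega> n]] by simp
qed simp

lemma S_le_imp_index_le_sum: "\<omega> \<in> space M \<Longrightarrow> S n \<omega> \<le> k \<Longrightarrow> n \<le> sum k UNIV"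
  using index_le_sum_S[of \<omega> n] sum_mono[of UNIV "S n \<omega>" k] by (force simp: le_fun_def)

lemma Ncount_eq_iff:
  assumes "\<omega> \<in> space M"
  shows "Ncount S k \<omega> = n \<longleftrightarrow> S n \<omega> \<le> k \<and> \<not> S (Suc n) \<omega> \<le> k"
proof -
  have Ncount_eqI: "Ncount S k \<omega> = m" if "S m \<omega> \<le> k" "\<not> S (Suc m) \<omega> \<le> k" for m
    unfolding Ncount_def
  proof (rule cSup_eq_maximum)
    show "m \<in> {n. S n \<omega> \<le> k}"
      using that by simp
    show "n \<le> m" if "n \<in> {n. S n \<omega> \<le> k}" for n
      using that \<open>\<not> S (Suc m) \<omega> \<le> k\<close> S_mono[OF assms, of "Suc m" n]
      by (auto intro: order_trans)
  qed
  obtain m where m: "S m \<omega> \<le> k" "\<not> S (Suc m) \<omega> \<le> k"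
  proof -
    have "S 0 \<omega> \<le> k"
      by (simp add: S_0[OF assms] le_fun_def)
    moreover have "\<not> S (Suc (sum k UNIV)) \<omega> \<le> k"
      using S_le_imp_index_le_sum[OF assms] by fastforce
    ultimately show thesis
      using that ex_least_nat_less[of "\<lambda>n. \<not> S n \<omega> \<le> k"] by blast
  qed
  show ?thesis
    by (metis Ncount_eqI m)
qed

lemma Zsm_0:
  assumes "\<omega> \<in> space M"
  shows "Zsm J S (\<lambda>_. 0) \<omega> = J 0 \<omega>"
proof -
  have "\<not> S (Suc 0) \<omega> \<le> (\<lambda>_. 0)"
    using S_less_Suc[OF assms, of 0] by (simp add: S_0[OF assms] less_le_not_le)
  then have "Ncount S (\<lambda>_. 0) \<omega> = 0"
    using Ncount_eq_iff[OF assms] S_0[OF assms] by simp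
  then show ?thesis
    by (simp add: Zsm_def)
qed

definition history :: "nat \<Rightarrow> 'w \<Rightarrow> (nat \<Rightarrow> nat) \<times> (nat \<Rightarrow> 'd \<Rightarrow> nat)" where
  "history n \<omega> = (restrict (\<lambda>m. J m \<omega>) {..n}, restrict (\<lambda>m. S m \<omega>) {..n})"

definition histories :: "nat \<Rightarrow> ('d \<Rightarrow> nat) \<Rightarrow> ((nat \<Rightarrow> nat) \<times> (nat \<Rightarrow> 'd \<Rightarrow> nat)) set" where
  "histories n l = Pi\<^sub>E {..n} (\<lambda>_. {1..s}) \<times> Pi\<^sub>E {..n} (\<lambda>_. {x. x \<le> l})"

lemma finite_histories: "finite (histories n l)"
  unfolding histories_def by (intro finite_cartesian_product finite_PiE finite_le_fun) auto

lemma history_in_histories: "\<omega> \<in> space M \<Longrightarrow> S n \<omega> \<le> l \<Longrightarrow> history n \<omega> \<in> histories n l"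
  using J_range S_mono by (force simp: histories_def history_def intro: order_trans)

lemma history_eq_iff:
  assumes "h \<in> histories n l"
  shows "history n \<omega> = h \<longleftrightarrow> (\<forall>m\<le>n. J m \<omega> = fst h m \<and> S m \<omega> = snd h m)"
  using assms
  by (auto simp: histories_def history_def prod_eq_iff restrict_def PiE_def extensional_def fun_eq_iff)

lemma measure_eq_sum_histories:
  assumes [measurable]: "Measurable.pred M P"
    and "\<And>\<omega>. \<omega> \<in> space M \<Longrightarrow> P \<omega> \<Longrightarrow> S n \<omega> \<le> l"
  shows "measure M {\<omega>\<in>space M. P \<omega>} = (\<Sum>h\<in>histories n l.
           measure M {\<omega>\<in>space M. P \<omega> \<and> (\<forall>m\<le>n. J m \<omega> = fst h m \<and> S m \<omega> = snd h m)})"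
proof -
  have "measure M {\<omega>\<in>space M. P \<omega>}
      = (\<Sum>h\<in>histories n l. measure M {\<omega>\<in>space M. P \<omega> \<and> history n \<omega> = h})"
  proof (rule measure_eq_sum_over_values[OF finite_histories])
    show "history n \<omega> \<in> histories n l" if "\<omega> \<in> space M" "P \<omega>" for \<omega>
      using that assms(2) history_in_histories by blast
    show "{\<omega>\<in>space M. P \<omega> \<and> history n \<omega> = h} \<in> sets M" if "h \<in> histories n l" for h
      unfolding history_eq_iff[OF that] by measurable
  qed
  then show ?thesis
    by (simp add: history_eq_iff cong: sum.cong)
qed

lemma markov_step:
  "measure M {\<omega>\<in>space M. J n \<omega> = r \<and> S n \<omega> = l \<and> J 0 \<omega> = i \<and>
                         J (Suc n) \<omega> = j \<and> S (Suc n) \<omega> - S n \<omega> = d}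
   = q d r j * measure M {\<omega>\<in>space M. J n \<omega> = r \<and> S n \<omega> = l \<and> J 0 \<omega> = i}"
proof -
  let ?E = "\<lambda>\<omega>. J n \<omega> = r \<and> S n \<omega> = l \<and> J 0 \<omega> = i"
  let ?T = "\<lambda>\<omega>. J (Suc n) \<omega> = j \<and> S (Suc n) \<omega> - S n \<omega> = d"
  let ?cylinder = "\<lambda>h \<omega>. \<forall>m\<le>n. J m \<omega> = fst h m \<and> S m \<omega> = snd h m"
  have cylinder_E: "{\<omega>\<in>space M. (?E \<omega> \<and> Q \<omega>) \<and> ?cylinder h \<omega>} =
      (if fst h n = r \<and> snd h n = l \<and> fst h 0 = i then {\<omega>\<in>space M. Q \<omega> \<and> ?cylinder h \<omega>} else {})"
    for h Q by auto
  have "measure M {\<omega>\<in>space M. ?E \<omega> \<and> ?T \<omega>}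
      = (\<Sum>h\<in>histories n l. measure M {\<omega>\<in>space M. (?E \<omega> \<and> ?T \<omega>) \<and> ?cylinder h \<omega>})"
    by (rule measure_eq_sum_histories) auto
  also have "\<dots> = (\<Sum>h\<in>histories n l. q d r j * measure M {\<omega>\<in>space M. (?E \<omega> \<and> True) \<and> ?cylinder h \<omega>})"
    unfolding cylinder_E using markov_property[of n j d] by (intro sum.cong) simp_all
  also have "\<dots> = q d r j * measure M {\<omega>\<in>space M. ?E \<omega>}"
    by (subst measure_eq_sum_histories[of ?E n l]) (auto simp: sum_distrib_left)
  finally show ?thesis
    by simp
qed

lemma measure_J_S_Suc:
  "measure M {\<omega>\<in>space M. J (Suc n) \<omega> = j \<and> S (Suc n) \<omega> = l \<and> J 0 \<omega> = i}
   = (\<Sum>(l', r)\<in>{l'. l' \<le> l} \<times> {1..s}.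
        q (l - l') r j * measure M {\<omega>\<in>space M. J n \<omega> = r \<and> S n \<omega> = l' \<and> J 0 \<omega> = i})"
proof -
  let ?X = "{l'. l' \<le> l} \<times> {1..s}"
  have "measure M {\<omega>\<in>space M. J (Suc n) \<omega> = j \<and> S (Suc n) \<omega> = l \<and> J 0 \<omega> = i}
      = (\<Sum>x\<in>?X. measure M {\<omega>\<in>space M. (J (Suc n) \<omega> = j \<and> S (Suc n) \<omega> = l \<and> J 0 \<omega> = i) \<and>
                                      (S n \<omega>, J n \<omega>) = x})"
  proof (rule measure_eq_sum_over_values)
    show "finite ?X"
      using finite_le_fun by blast
    show "(S n \<omega>, J n \<omega>) \<in> ?X"
      if "\<omega> \<in> space M" "J (Suc n) \<omega> = j \<and> S (Suc n) \<omega> = l \<and> J 0 \<omega> = i" for \<omega>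
      using that S_mono[of \<omega> n "Suc n"] J_range by auto
  qed (auto simp: prod_eq_iff)
  also have "\<dots> = (\<Sum>(l', r)\<in>?X. measure M {\<omega>\<in>space M. J n \<omega> = r \<and> S n \<omega> = l' \<and> J 0 \<omega> = i \<and>
                                      J (Suc n) \<omega> = j \<and> S (Suc n) \<omega> - S n \<omega> = l - l'})"
  proof (rule sum.cong[OF refl], clarify)
    fix l' r assume "l' \<le> l"
    have "S (Suc n) \<omega> = l \<longleftrightarrow> S (Suc n) \<omega> - l' = l - l'" if "\<omega> \<in> space M" "S n \<omega> = l'" for \<omega>
      using that \<open>l' \<le> l\<close> S_mono[of \<omega> n "Suc n"] by (auto simp: diff_fun_cancel_iff)
    then show "measure M {\<omega>\<in>space M. (J (Suc n) \<omega> = j \<and> S (Suc n) \<omega> = l \<and> J 0 \<omega> = i) \<and> (S n \<omega>, J n \<omega>) = (l', r)}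
        = measure M {\<omega>\<in>space M. J n \<omega> = r \<and> S n \<omega> = l' \<and> J 0 \<omega> = i \<and>
                                 J (Suc n) \<omega> = j \<and> S (Suc n) \<omega> - S n \<omega> = l - l'}"
      by (intro arg_cong[where f = "measure M"]) auto
  qed
  finally show ?thesis
    by (simp add: markov_step)
qed

lemma measure_J_S_eq_convpow:
  "measure M {\<omega>\<in>space M. J n \<omega> = j \<and> S n \<omega> = l \<and> J 0 \<omega> = i}
   = convpow s q n l i j * measure M {\<omega>\<in>space M. J 0 \<omega> = i}"
proof (induction n arbitrary: j l)
  case 0
  have "{\<omega>\<in>space M. J 0 \<omega> = j \<and> S 0 \<omega> = l \<and> J 0 \<omega> = i}
      = (if l = (\<lambda>_. 0) \<and> i = j then {\<omega>\<in>space M. J 0 \<omega> = i} else {})"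
    using S_0 by auto
  then show ?case
    by (simp add: idseq_def)
next
  case (Suc n)
  have "measure M {\<omega>\<in>space M. J (Suc n) \<omega> = j \<and> S (Suc n) \<omega> = l \<and> J 0 \<omega> = i}
      = (\<Sum>(l', r)\<in>{l'. l' \<le> l} \<times> {1..s}.
           convpow s q n l' i r * q (l - l') r j * measure M {\<omega>\<in>space M. J 0 \<omega> = i})"
    by (simp add: measure_J_S_Suc Suc case_prod_beta mult_ac)
  also have "\<dots> = convpow s q (Suc n) l i j * measure M {\<omega>\<in>space M. J 0 \<omega> = i}"
    by (simp add: conv_def sum.cartesian_product sum_distrib_right case_prod_beta)
  finally show ?case .
qed

lemma measure_next_renewal_le:
  assumes "l \<le> k"
  shows "measure M {\<omega>\<in>space M. J n \<omega> = j \<and> S n \<omega> = l \<and> J 0 \<omega> = i \<and> S (Suc n) \<omega> \<le> k}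
    = Hdist s q j (k - l) * measure M {\<omega>\<in>space M. J n \<omega> = j \<and> S n \<omega> = l \<and> J 0 \<omega> = i}"
proof -
  let ?E = "\<lambda>\<omega>. J n \<omega> = j \<and> S n \<omega> = l \<and> J 0 \<omega> = i"
  let ?X = "{1..s} \<times> {d. d \<le> k - l}"
  have "measure M {\<omega>\<in>space M. ?E \<omega> \<and> S (Suc n) \<omega> \<le> k}
      = (\<Sum>x\<in>?X. measure M {\<omega>\<in>space M. (?E \<omega> \<and> S (Suc n) \<omega> \<le> k) \<and>
                                      (J (Suc n) \<omega>, S (Suc n) \<omega> - S n \<omega>) = x})"
  proof (rule measure_eq_sum_over_values)
    show "finite ?X"
      using finite_le_fun by blast
    show "(J (Suc n) \<omega>, S (Suc n) \<omega> - S n \<omega>) \<in> ?X"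
      if "\<omega> \<in> space M" "?E \<omega> \<and> S (Suc n) \<omega> \<le> k" for \<omega>
      using that assms J_range by (auto simp: diff_fun_le_diff_iff)
  qed (auto simp: prod_eq_iff)
  also have "\<dots> = (\<Sum>(j', d)\<in>?X. measure M {\<omega>\<in>space M. ?E \<omega> \<and> J (Suc n) \<omega> = j' \<and> S (Suc n) \<omega> - S n \<omega> = d})"
  proof (rule sum.cong[OF refl], clarify)
    fix d j' assume "d \<le> k - l"
    then have "S (Suc n) \<omega> \<le> k" if "S (Suc n) \<omega> - l = d" for \<omega>
      using that \<open>d \<le> k - l\<close> diff_fun_le_diff_iff[OF assms, of "S (Suc n) \<omega>"] by simp
    then show "measure M {\<omega>\<in>space M. (?E \<omega> \<and> S (Suc n) \<omega> \<le> k) \<and> (J (Suc n) \<omega>, S (Suc n) \<omega> - S n \<omega>) = (j', d)}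
        = measure M {\<omega>\<in>space M. ?E \<omega> \<and> J (Suc n) \<omega> = j' \<and> S (Suc n) \<omega> - S n \<omega> = d}"
      by (intro arg_cong[where f = "measure M"]) auto
  qed
  also have "\<dots> = Hdist s q j (k - l) * measure M {\<omega>\<in>space M. ?E \<omega>}"
    by (simp add: markov_step Hdist_def sum.cartesian_product sum_distrib_right case_prod_beta)
  finally show ?thesis
    by simp
qed

lemma measure_last_renewal:
  assumes "l \<le> k"
  shows "measure M {\<omega>\<in>space M. J n \<omega> = j \<and> S n \<omega> = l \<and> J 0 \<omega> = i \<and> \<not> S (Suc n) \<omega> \<le> k}
    = convpow s q n l i j * (1 - Hdist s q j (k - l)) * measure M {\<omega>\<in>space M. J 0 \<omega> = i}"
proof -
  let ?E = "{\<omega>\<in>space M. J n \<omega> = j \<and> S n \<omega> = l \<and> J 0 \<omega> = i}"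
  let ?F = "{\<omega>\<in>space M. J n \<omega> = j \<and> S n \<omega> = l \<and> J 0 \<omega> = i \<and> S (Suc n) \<omega> \<le> k}"
  have "{\<omega>\<in>space M. J n \<omega> = j \<and> S n \<omega> = l \<and> J 0 \<omega> = i \<and> \<not> S (Suc n) \<omega> \<le> k} = ?E - ?F"
    by auto
  moreover have "measure M (?E - ?F) = measure M ?E - measure M ?F"
    by (rule finite_measure_Diff) auto
  ultimately show ?thesis
    by (simp add: measure_next_renewal_le[OF assms] measure_J_S_eq_convpow algebra_simps)
qed

(* q^(n)(l) vanishes for n > |l| because S_n grows strictly; this is read off the chain itself,
   hence the initial state of positive probability. *)
lemma convpow_eq_0:
  assumes "measure M {\<omega>\<in>space M. J 0 \<omega> = i} > 0" and "sum l UNIV < n"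
  shows "convpow s q n l i j = 0"
proof -
  have empty: "{\<omega>\<in>space M. J n \<omega> = j \<and> S n \<omega> = l \<and> J 0 \<omega> = i} = {}"
    using assms(2) by (auto dest: index_le_sum_S[of _ n])
  show ?thesis
    using measure_J_S_eq_convpow[of n j l i] assms(1) unfolding empty by simp
qed

lemma useq_eq_sum_convpow:
  assumes "measure M {\<omega>\<in>space M. J 0 \<omega> = i} > 0" and "sum l UNIV \<le> N"
  shows "useq s q l i j = (\<Sum>n\<le>N. convpow s q n l i j)"
  unfolding useq_def using assms by (intro suminf_finite) (auto intro: convpow_eq_0)

lemma measure_Zsm_eq_sum_last_renewal:
  "measure M {\<omega>\<in>space M. Zsm J S k \<omega> = j \<and> J 0 \<omega> = i}
   = (\<Sum>(l, n)\<in>{l. l \<le> k} \<times> {..sum k UNIV}.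
        measure M {\<omega>\<in>space M. J n \<omega> = j \<and> S n \<omega> = l \<and> J 0 \<omega> = i \<and> \<not> S (Suc n) \<omega> \<le> k})"
proof -
  let ?X = "{l. l \<le> k} \<times> {..sum k UNIV}"
  let ?last = "\<lambda>\<omega>. (S (Ncount S k \<omega>) \<omega>, Ncount S k \<omega>)"
  have pieces: "{\<omega>\<in>space M. (Zsm J S k \<omega> = j \<and> J 0 \<omega> = i) \<and> ?last \<omega> = (l, n)}
      = {\<omega>\<in>space M. J n \<omega> = j \<and> S n \<omega> = l \<and> J 0 \<omega> = i \<and> \<not> S (Suc n) \<omega> \<le> k}"
    if "l \<le> k" for l n
  proof -
    have "(Zsm J S k \<omega> = j \<and> J 0 \<omega> = i) \<and> ?last \<omega> = (l, n)
        \<longleftrightarrow> J n \<omega> = j \<and> S n \<omega> = l \<and> J 0 \<omega> = i \<and> \<not> S (Suc n) \<omega> \<le> k" if "\<omega> \<in> space M" for \<omega>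
      using Ncount_eq_iff[OF that, of k n] \<open>l \<le> k\<close> by (auto simp: Zsm_def)
    then show ?thesis
      by auto
  qed
  have "measure M {\<omega>\<in>space M. Zsm J S k \<omega> = j \<and> J 0 \<omega> = i}
      = (\<Sum>x\<in>?X. measure M {\<omega>\<in>space M. (Zsm J S k \<omega> = j \<and> J 0 \<omega> = i) \<and> ?last \<omega> = x})"
  proof (rule measure_eq_sum_over_values)
    show "finite ?X"
      using finite_le_fun by blast
    show "?last \<omega> \<in> ?X" if "\<omega> \<in> space M" for \<omega>
      using Ncount_eq_iff[OF that] S_le_imp_index_le_sum[OF that] by auto
    show "{\<omega>\<in>space M. (Zsm J S k \<omega> = j \<and> J 0 \<omega> = i) \<and> ?last \<omega> = x} \<in> sets M"
      if "x \<in> ?X" for x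
    proof (cases x)
      case (Pair l n)
      with that have "l \<le> k"
        by simp
      show ?thesis
        unfolding Pair pieces[OF \<open>l \<le> k\<close>] by measurable
    qed
  qed
  also have "\<dots> = (\<Sum>(l, n)\<in>?X.
      measure M {\<omega>\<in>space M. J n \<omega> = j \<and> S n \<omega> = l \<and> J 0 \<omega> = i \<and> \<not> S (Suc n) \<omega> \<le> k})"
    by (rule sum.cong[OF refl]) (clarsimp simp only: pieces)
  finally show ?thesis .
qed

lemma measure_Zsm_eq_conv:
  assumes "j \<in> {1..s}" and pos: "measure M {\<omega>\<in>space M. J 0 \<omega> = i} > 0"
  shows "measure M {\<omega>\<in>space M. Zsm J S k \<omega> = j \<and> J 0 \<omega> = i}
    = conv s (useq s q) (Htilde s q) k i j * measure M {\<omega>\<in>space M. J 0 \<omega> = i}"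
proof -
  define N where "N = sum k UNIV"
  let ?c = "measure M {\<omega>\<in>space M. J 0 \<omega> = i}"
  have "measure M {\<omega>\<in>space M. Zsm J S k \<omega> = j \<and> J 0 \<omega> = i}
      = (\<Sum>(l, n)\<in>{l. l \<le> k} \<times> {..N}. convpow s q n l i j * (1 - Hdist s q j (k - l)) * ?c)"
    unfolding measure_Zsm_eq_sum_last_renewal N_def
    by (rule sum.cong[OF refl]) (auto simp: measure_last_renewal)
  also have "\<dots> = (\<Sum>l | l \<le> k. (\<Sum>n\<le>N. convpow s q n l i j) * (1 - Hdist s q j (k - l)) * ?c)"
    by (simp add: sum.cartesian_product[symmetric] sum_distrib_right)
  also have "\<dots> = (\<Sum>l | l \<le> k. useq s q l i j * (1 - Hdist s q j (k - l)) * ?c)"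
  proof (rule sum.cong[OF refl])
    fix l assume "l \<in> {l. l \<le> k}"
    then have "useq s q l i j = (\<Sum>n\<le>N. convpow s q n l i j)"
      using pos by (intro useq_eq_sum_convpow) (auto simp: N_def le_fun_def intro: sum_mono)
    then show "(\<Sum>n\<le>N. convpow s q n l i j) * (1 - Hdist s q j (k - l)) * ?c
        = useq s q l i j * (1 - Hdist s q j (k - l)) * ?c"
      by simp
  qed
  also have "\<dots> = conv s (useq s q) (Htilde s q) k i j * ?c"
    using assms(1) by (simp add: conv_def Htilde_def if_distrib sum_distrib_right cong: if_cong)
  finally show ?thesis .
qed

end

theorem proposition8:
  fixes M :: "'w measure" and s :: nat and q :: "('d::finite) mseq"
    and J :: "nat \<Rightarrow> 'w \<Rightarrow> nat" and S :: "nat \<Rightarrow> 'w \<Rightarrow> ('d \<Rightarrow> nat)"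
    and i j :: nat and k :: "'d \<Rightarrow> nat"
  assumes "multi_time_MRC M s q J S"
    and "i \<in> {1..s}" and "j \<in> {1..s}"
    and "measure M {\<omega>\<in>space M. Zsm J S (\<lambda>_. 0) \<omega> = i} > 0"
  shows "smc_transition M J S k i j = conv s (useq s q) (Htilde s q) k i j"
proof -
  interpret markov_renewal_chain M s q J S
    using assms(1) by unfold_locales
  have initial_state: "{\<omega>\<in>space M. Zsm J S (\<lambda>_. 0) \<omega> = i \<and> P \<omega>} = {\<omega>\<in>space M. J 0 \<omega> = i \<and> P \<omega>}" for P
    by (auto simp: Zsm_0)
  show ?thesis
    using initial_state[of "\<lambda>_. True"] initial_state[of "\<lambda>\<omega>. Zsm J S k \<omega> = j"]
      measure_Zsm_eq_conv[OF assms(3)] assms(4)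
    by (simp add: smc_transition_def conj_commute)
qed

end
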